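(* Let $A>0$ and let $k_{\min},k_{\max},\mu_{\min},\mu_{\max}\in C^0([0,A];\mathbb{R}_{\ge 0})$ be Lipschitz functions such that $$k_{\min}(a)\le k_{\max}(a),\qquad \mu_{\min}(a)\le \mu_{\max}(a)\qquad \forall a\in[0,A],$$ and $$\int_0^A k_{\min}(a)\,e^{-\int_0^a \mu_{\max}(s)\,ds}\,da>1 .$$ Let $\zeta_{\min}$ and $\zeta_{\max}$ be the unique solutions of $$\int_0^A k_{\min}(a)e^{-\zeta_{\min} a-\int_0^a \mu_{\max}(s)\,ds}\,da=1,\qquad \int_0^A k_{\max}(a)e^{-\zeta_{\max} a-\int_0^a \mu_{\min}(s)\,ds}\,da=1,$$ so that $\zeta_{\min}\le\zeta_{\max}$. Let $G>0$ be large enough that $\|f\|_\infty+\sup_{a\neq s}\frac{|f(a)-f(s)|}{|a-s|}\le G$ for each $f\in\{k_{\min},k_{\max},\mu_{\min},\mu_{\max}\}$. Define $$H_G:=\Big\{f\in C^0([0,A];\mathbb{R}_{\ge0}):\ \|f\|_\infty+\sup_{a,s\in[0,A],\,a\ne s}\tfrac{|f(a)-f(s)|}{|a-s|}\le G\Big\},$$ $$S:=\{(k,\mu)\in H_G^2:\ k_{\min}(a)\le k(a)\le k_{\max}(a),\ \mu_{\min}(a)\le\mu(a)\le\mu_{\max}(a)\ \forall a\in[0,A]\}.$$ For $(k,\mu)\in S$ let $P(k,\mu)=\zeta$, where $\zeta>0$ is the unique solution of $\int_0^A k(a)e^{-\zeta a-\int_0^a\mu(s)\,ds}\,da=1$.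 Then $P$ maps $S$ into $[\zeta_{\min},\zeta_{\max}]$ and is Lipschitz continuous with respect to the sup norm: for all $(k,\mu),(\tilde k,\tilde\mu)\in S$, $$|P(\tilde k,\tilde\mu)-P(k,\mu)|\le L\,\|\tilde k-k\|_\infty+L\,\|k_{\max}\|_\infty\,A\,\|\tilde\mu-\mu\|_\infty,$$ where, with $I(a):=e^{-\int_0^a\mu_{\max}(s)\,ds}$, $$L=\frac{A\,\bigl(2A\|k_{\max}\|_\infty\bigr)^{2A\|k_{\max}\|_\infty-1}}{\left(\int_0^A a\,k_{\min}(a)I(a)\,da\right)\ln\!\left(\int_0^A k_{\min}(a)I(a)\,da\right)}.$$
   Context: $\|f\|_\infty=\sup_{a\in[0,A]}|f(a)|$. $C^0([0,A];\mathbb{R}_{\ge0})$ denotes continuous nonnegative functions on $[0,A]$. $P$ is the Lotka–Sharpe map assigning to a fertility profile $k$ and mortality profile $\mu$ the intrinsic growth rate $\zeta$. *)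

theory Defs
  imports "HOL-Analysis.Analysis"
begin

definition sup_norm :: "real \<Rightarrow> (real \<Rightarrow> real) \<Rightarrow> real" where
  "sup_norm A f = Sup ((\<lambda>a. \<bar>f a\<bar>) ` {0..A})"

definition diff_quots :: "real \<Rightarrow> (real \<Rightarrow> real) \<Rightarrow> real set" where
  "diff_quots A f = {\<bar>f a - f s\<bar> / \<bar>a - s\<bar> | a s. a \<in> {0..A} \<and> s \<in> {0..A} \<and> a \<noteq> s}"

definition lip_seminorm :: "real \<Rightarrow> (real \<Rightarrow> real) \<Rightarrow> real" where
  "lip_seminorm A f = Sup (diff_quots A f)"

text \<open>The set H_G (the supremum of difference quotients is required to be finite).\<close>
definition H_G :: "real \<Rightarrow> real \<Rightarrow> (real \<Rightarrow> real) set" where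
  "H_G A G = {f. continuous_on {0..A} f \<and> (\<forall>a\<in>{0..A}. 0 \<le> f a) \<and>
                 bdd_above (diff_quots A f) \<and> sup_norm A f + lip_seminorm A f \<le> G}"

definition lotka_eq :: "real \<Rightarrow> (real \<Rightarrow> real) \<Rightarrow> (real \<Rightarrow> real) \<Rightarrow> real \<Rightarrow> bool" where
  "lotka_eq A k \<mu> \<zeta> \<longleftrightarrow>
     integral {0..A} (\<lambda>a. k a * exp (- \<zeta> * a - integral {0..a} \<mu>)) = 1"

definition lotka_sol :: "real \<Rightarrow> (real \<Rightarrow> real) \<Rightarrow> (real \<Rightarrow> real) \<Rightarrow> real" where
  "lotka_sol A k \<mu> = (THE \<zeta>. lotka_eq A k \<mu> \<zeta>)"

definition lotka_P :: "real \<Rightarrow> (real \<Rightarrow> real) \<Rightarrow> (real \<Rightarrow> real) \<Rightarrow> real" where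
  "lotka_P A k \<mu> = (THE \<zeta>. 0 < \<zeta> \<and> lotka_eq A k \<mu> \<zeta>)"

end

theory Submission
  imports Defs
begin

text \<open>
  Write g = k exp(- int_0^a mu) for the net maternity of (k, mu). The characteristic equation
  says F_g(zeta) = 1 for the truncated Laplace transform F_g(zeta) = int_0^A g(a) exp(- zeta a) da.
  Since F_g is strictly decreasing in zeta, the root is unique and increases with g; the box
  constraints order the net maternities pointwise, which places P(k, mu) between zeta_min and
  zeta_max. Every root is at most K = sup kmax, because F_g(zeta) <= K / zeta.

  For the Lipschitz bound let zeta <= zeta' be the roots for g and g'. Convexity of exp gives
  F_g'(zeta) - F_g'(zeta') >= (zeta' - zeta) exp(- K A) D with D = int_0^A a kmin(a) I(a) da,
  while F_g'(zeta) - F_g'(zeta') = F_g'(zeta) - F_g(zeta) <= A sup |g' - g|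
  <= A (sup |k' - k| + K A sup |mu' - mu|). Finally exp(K A) ln R <= (2AK)^(2AK-1) whenever
  1 < R <= A K, and R = int_0^A kmin I satisfies this; so exp(K A) A / D <= L.
\<close>

lemma abs_exp_minus_diff_le:
  fixes x y :: real
  assumes "0 \<le> x" "0 \<le> y"
  shows "\<bar>exp (- x) - exp (- y)\<bar> \<le> \<bar>x - y\<bar>"
proof -
  have *: "exp (- u) - exp (- v) \<le> v - u" if "0 \<le> u" "u \<le> v" for u v :: real
  proof -
    have "exp (- u) - exp (- v) = exp (- u) * (1 - exp (- (v - u)))"
      by (simp add: algebra_simps flip: exp_add)
    also have "\<dots> \<le> 1 * (v - u)"
    proof (rule mult_mono)
      show "1 - exp (- (v - u)) \<le> v - u"
        using exp_ge_add_one_self[of "- (v - u)"] by linarith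
    qed (use that in auto)
    finally show ?thesis by simp
  qed
  show ?thesis
    using *[of x y] *[of y x] assms by (cases "x \<le> y") (auto simp: abs_le_iff)
qed

lemma integral_weighted_pos:
  fixes g w :: "real \<Rightarrow> real"
  assumes "0 < A" and "continuous_on {0..A} g" "continuous_on {0..A} w"
    and "\<forall>a\<in>{0..A}. 0 \<le> g a" "\<forall>a\<in>{0..A}. 0 \<le> w a" "\<forall>a\<in>{0<..A}. 0 < w a"
    and "integral {0..A} g \<noteq> 0"
  shows "0 < integral {0..A} (\<lambda>a. w a * g a)"
proof (rule ccontr)
  assume "\<not> ?thesis"
  moreover have "0 \<le> integral {0..A} (\<lambda>a. w a * g a)"
    using assms by (intro integral_nonneg integrable_continuous_interval continuous_intros) auto
  ultimately have "integral (cbox 0 A) (\<lambda>a. w a * g a) = 0"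
    by simp
  then have "\<forall>a\<in>{0..A}. w a * g a = 0"
    using integral_cbox_eq_0_iff[of 0 A "\<lambda>a. w a * g a"] assms
    by (auto intro!: continuous_intros)
  then have "g a = 0" if "a \<in> {0<..A}" for a
    using that assms(6) by force
  then have "g a = 0" if "a \<in> {0..A}" for a
    using continuous_constant_on_closure[of "{0<..A}" g 0 a] that assms(1,2) by auto
  then have "integral {0..A} g = integral {0..A} (\<lambda>_. 0)"
    by (intro integral_cong) simp
  then have "integral {0..A} g = 0"
    by simp
  with assms(7) show False ..
qed

lemma abs_le_sup_norm:
  fixes f :: "real \<Rightarrow> real"
  assumes "continuous_on {0..A} f" "a \<in> {0..A}"
  shows "\<bar>f a\<bar> \<le> sup_norm A f"
proof -
  have "compact ((\<lambda>a. \<bar>f a\<bar>) ` {0..A})"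
    by (intro compact_continuous_image continuous_intros assms) auto
  then have "bdd_above ((\<lambda>a. \<bar>f a\<bar>) ` {0..A})"
    by (intro bounded_imp_bdd_above compact_imp_bounded)
  then show ?thesis
    unfolding sup_norm_def using assms(2) by (rule cSUP_upper2) auto
qed

lemma sup_norm_nonneg:
  fixes f :: "real \<Rightarrow> real"
  assumes "0 \<le> A" "continuous_on {0..A} f"
  shows "0 \<le> sup_norm A f"
  using abs_le_sup_norm[OF assms(2), of 0] assms(1) by auto

section \<open>A Laplace transform truncated to the age interval\<close>

definition trunc_laplace :: "real \<Rightarrow> (real \<Rightarrow> real) \<Rightarrow> real \<Rightarrow> real" where
  "trunc_laplace A g z = integral {0..A} (\<lambda>a. g a * exp (- z * a))"

lemma integrable_trunc_laplace:
  fixes g :: "real \<Rightarrow> real"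
  assumes "continuous_on {0..A} g"
  shows "(\<lambda>a. g a * exp (- z * a)) integrable_on {0..A}"
  by (intro integrable_continuous_interval continuous_intros assms)

lemma trunc_laplace_mono:
  assumes "continuous_on {0..A} g" "continuous_on {0..A} h" "\<forall>a\<in>{0..A}. g a \<le> h a"
  shows "trunc_laplace A g z \<le> trunc_laplace A h z"
  unfolding trunc_laplace_def using assms by (intro integral_le integrable_trunc_laplace) auto

lemma trunc_laplace_le_divide:
  assumes "0 \<le> A" "continuous_on {0..A} g" "\<forall>a\<in>{0..A}. 0 \<le> g a \<and> g a \<le> M" "0 < z"
  shows "trunc_laplace A g z \<le> M / z"
proof -
  have "0 \<le> M"
    using assms(1,3) by force
  have tail: "((\<lambda>a. M * exp (- z * a)) has_integral M / z) {0..}"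
    using has_integral_mult_right[OF has_integral_exp_minus_to_infinity[OF \<open>0 < z\<close>, of 0], of M]
    by simp
  have "trunc_laplace A g z \<le> integral {0..A} (\<lambda>a. M * exp (- z * a))"
    unfolding trunc_laplace_def using assms(3)
    by (intro integral_le integrable_trunc_laplace assms(2))
      (auto intro: integrable_continuous_interval continuous_intros)
  also have "\<dots> \<le> integral {0..} (\<lambda>a. M * exp (- z * a))"
    by (intro integral_subset_le has_integral_integrable[OF tail] integrable_continuous_interval
        continuous_intros) (use \<open>0 \<le> M\<close> in auto)
  also have "\<dots> = M / z"
    using tail by (rule integral_unique)
  finally show ?thesis .
qed

lemma abs_trunc_laplace_diff_le:
  assumes "0 \<le> A" "continuous_on {0..A} g" "continuous_on {0..A} h"
    and "\<forall>a\<in>{0..A}. \<bar>h a - g a\<bar> \<le> \<epsilon>" "0 \<le> z"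
  shows "\<bar>trunc_laplace A h z - trunc_laplace A g z\<bar> \<le> A * \<epsilon>"
proof -
  have "trunc_laplace A h z - trunc_laplace A g z
      = integral {0..A} (\<lambda>a. (h a - g a) * exp (- z * a))"
    unfolding trunc_laplace_def left_diff_distrib
    by (intro integral_diff[symmetric] integrable_trunc_laplace assms)
  moreover have "\<bar>integral {0..A} (\<lambda>a. (h a - g a) * exp (- z * a))\<bar> \<le> integral {0..A} (\<lambda>_. \<epsilon>)"
  proof (rule Henstock_Kurzweil_Integration.integral_norm_bound_integral[where 'a = real,
        unfolded real_norm_def])
    fix a assume a: "a \<in> {0..A}"
    have "\<bar>h a - g a\<bar> * exp (- z * a) \<le> \<epsilon> * 1"
      using assms(4,5) a by (intro mult_mono) auto
    then show "\<bar>(h a - g a) * exp (- z * a)\<bar> \<le> \<epsilon>"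
      by (simp add: abs_mult)
  qed (auto intro!: integrable_continuous_interval continuous_intros assms(2,3))
  ultimately show ?thesis
    using assms(1) by simp
qed

lemma lipschitz_on_trunc_laplace:
  assumes "0 \<le> A" "continuous_on {0..A} g" "\<forall>a\<in>{0..A}. 0 \<le> g a"
  shows "(A * integral {0..A} g)-lipschitz_on {0..} (trunc_laplace A g)"
proof (rule lipschitz_onI)
  fix x y :: real assume "x \<in> {0..}" "y \<in> {0..}"
  then have xy: "0 \<le> x" "0 \<le> y" by auto
  have "trunc_laplace A g x - trunc_laplace A g y
      = integral {0..A} (\<lambda>a. g a * (exp (- x * a) - exp (- y * a)))"
    unfolding trunc_laplace_def right_diff_distrib
    by (intro integral_diff[symmetric] integrable_trunc_laplace assms)
  moreover have "\<bar>integral {0..A} (\<lambda>a. g a * (exp (- x * a) - exp (- y * a)))\<bar>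
      \<le> integral {0..A} (\<lambda>a. \<bar>x - y\<bar> * A * g a)"
  proof (rule Henstock_Kurzweil_Integration.integral_norm_bound_integral[where 'a = real,
        unfolded real_norm_def])
    fix a assume a: "a \<in> {0..A}"
    have "\<bar>exp (- (x * a)) - exp (- (y * a))\<bar> \<le> \<bar>x * a - y * a\<bar>"
      using a xy by (intro abs_exp_minus_diff_le) auto
    also have "\<dots> = \<bar>x - y\<bar> * a"
      using a by (simp add: abs_mult flip: left_diff_distrib)
    also have "\<dots> \<le> \<bar>x - y\<bar> * A"
      using a by (intro mult_left_mono) auto
    finally have "\<bar>exp (- (x * a)) - exp (- (y * a))\<bar> \<le> \<bar>x - y\<bar> * A" .
    from mult_left_mono[OF this, of "g a"]
    show "\<bar>g a * (exp (- x * a) - exp (- y * a))\<bar> \<le> \<bar>x - y\<bar> * A * g a"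
      using assms(3) a by (simp add: abs_mult mult_ac)
  qed (auto intro!: integrable_continuous_interval continuous_intros assms(2))
  ultimately show
    "dist (trunc_laplace A g x) (trunc_laplace A g y) \<le> A * integral {0..A} g * dist x y"
    by (simp add: dist_real_def mult_ac)
qed (use assms in \<open>auto intro!: mult_nonneg_nonneg integral_nonneg integrable_continuous_interval\<close>)

lemma trunc_laplace_diff_ge:
  assumes "continuous_on {0..A} g" "\<forall>a\<in>{0..A}. 0 \<le> g a" "z \<le> z'"
  shows "(z' - z) * integral {0..A} (\<lambda>a. a * g a * exp (- z' * a))
           \<le> trunc_laplace A g z - trunc_laplace A g z'"
proof -
  have "(z' - z) * integral {0..A} (\<lambda>a. a * g a * exp (- z' * a))
      = integral {0..A} (\<lambda>a. (z' - z) * (a * g a * exp (- z' * a)))"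
    by simp
  also have "\<dots> \<le> integral {0..A} (\<lambda>a. g a * exp (- z * a) - g a * exp (- z' * a))"
  proof (rule integral_le)
    fix a assume a: "a \<in> {0..A}"
    have "exp (- z' * a) * (1 + (z' - z) * a) \<le> exp (- z' * a) * exp ((z' - z) * a)"
      by (intro mult_left_mono) auto
    also have "\<dots> = exp (- z * a)"
      by (simp add: algebra_simps flip: exp_add)
    finally have "(z' - z) * a * exp (- z' * a) \<le> exp (- z * a) - exp (- z' * a)"
      by (simp add: algebra_simps)
    from mult_left_mono[OF this, of "g a"] a assms(2)
    show "(z' - z) * (a * g a * exp (- z' * a)) \<le> g a * exp (- z * a) - g a * exp (- z' * a)"
      by (simp add: algebra_simps)
  qed (auto intro!: integrable_continuous_interval continuous_intros assms(1))
  also have "\<dots> = trunc_laplace A g z - trunc_laplace A g z'"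
    unfolding trunc_laplace_def by (intro integral_diff integrable_trunc_laplace assms(1))
  finally show ?thesis .
qed

lemma trunc_laplace_strict_antimono:
  assumes "0 < A" "continuous_on {0..A} g" "\<forall>a\<in>{0..A}. 0 \<le> g a"
    and "integral {0..A} g \<noteq> 0" "z < z'"
  shows "trunc_laplace A g z' < trunc_laplace A g z"
proof -
  have "0 < integral {0..A} (\<lambda>a. (a * exp (- z' * a)) * g a)"
    using assms by (intro integral_weighted_pos) (auto intro!: continuous_intros)
  then have "0 < (z' - z) * integral {0..A} (\<lambda>a. a * g a * exp (- z' * a))"
    using assms(5) by (simp add: mult_ac)
  with trunc_laplace_diff_ge[OF assms(2,3), of z z'] assms(5) show ?thesis
    by simp
qed

lemma trunc_laplace_eq_1_ex1:
  assumes "0 < A" "continuous_on {0..A} g" "\<forall>a\<in>{0..A}. 0 \<le> g a" "1 < integral {0..A} g"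
  shows "\<exists>!z. trunc_laplace A g z = 1"
proof -
  define M where "M = sup_norm A g"
  have gM: "\<forall>a\<in>{0..A}. 0 \<le> g a \<and> g a \<le> M"
    using assms(3) abs_le_sup_norm[OF assms(2)] unfolding M_def by force
  then have "0 \<le> M"
    using assms(1) by force
  have "trunc_laplace A g (M + 1) \<le> M / (M + 1)"
    using \<open>0 \<le> M\<close> assms(1) by (intro trunc_laplace_le_divide assms(2) gM) auto
  also have "\<dots> < 1"
    using \<open>0 \<le> M\<close> by simp
  finally have "trunc_laplace A g (M + 1) \<le> 1" by simp
  moreover have "1 \<le> trunc_laplace A g 0"
    using assms(4) by (simp add: trunc_laplace_def)
  moreover have "continuous_on {0..M + 1} (trunc_laplace A g)"
    using lipschitz_on_continuous_on[OF lipschitz_on_trunc_laplace[OF _ assms(2,3)]] assms(1)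
    by (auto intro: continuous_on_subset)
  ultimately obtain z where "trunc_laplace A g z = 1"
    using IVT2'[of "trunc_laplace A g" "M + 1" 1 0] \<open>0 \<le> M\<close> by auto
  moreover have "y = z" if "trunc_laplace A g y = 1" for y
    using trunc_laplace_strict_antimono[OF assms(1-3), of y z]
      trunc_laplace_strict_antimono[OF assms(1-3), of z y] assms(4) that \<open>trunc_laplace A g z = 1\<close>
    by (cases y z rule: linorder_cases) auto
  ultimately show ?thesis
    by blast
qed

lemma trunc_laplace_eq_1_imp_pos:
  assumes "0 < A" "continuous_on {0..A} g" "\<forall>a\<in>{0..A}. 0 \<le> g a" "1 < integral {0..A} g"
    and "trunc_laplace A g z = 1"
  shows "0 < z"
proof (rule ccontr)
  assume "\<not> 0 < z"
  then have "trunc_laplace A g 0 \<le> trunc_laplace A g z"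
    using trunc_laplace_strict_antimono[OF assms(1-3), of z 0] assms(4)
    by (cases "z = 0") auto
  with assms(4,5) show False
    by (simp add: trunc_laplace_def)
qed

lemma trunc_laplace_root_le:
  assumes "0 \<le> A" "continuous_on {0..A} g" "\<forall>a\<in>{0..A}. 0 \<le> g a \<and> g a \<le> M"
    and "0 < z" "trunc_laplace A g z = 1"
  shows "z \<le> M"
  using trunc_laplace_le_divide[OF assms(1-4)] assms(4,5) by (simp add: pos_le_divide_eq)

lemma trunc_laplace_root_mono:
  assumes "0 < A" "continuous_on {0..A} g" "continuous_on {0..A} h"
    and "\<forall>a\<in>{0..A}. 0 \<le> g a \<and> g a \<le> h a" "integral {0..A} g \<noteq> 0"
    and "trunc_laplace A g y = 1" "trunc_laplace A h z = 1"
  shows "y \<le> z"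
proof (rule ccontr)
  assume "\<not> y \<le> z"
  then have "trunc_laplace A g y < trunc_laplace A g z"
    using assms by (intro trunc_laplace_strict_antimono) auto
  also have "\<dots> \<le> trunc_laplace A h z"
    using assms by (intro trunc_laplace_mono) auto
  finally show False
    using assms(6,7) by simp
qed

lemma trunc_laplace_root_increase_le:
  assumes "0 \<le> A" "continuous_on {0..A} g" "continuous_on {0..A} g'" "continuous_on {0..A} h"
    and "\<forall>a\<in>{0..A}. 0 \<le> h a \<and> h a \<le> g' a" "\<forall>a\<in>{0..A}. \<bar>g' a - g a\<bar> \<le> \<epsilon>"
    and "0 \<le> z" "z \<le> z'" "z' \<le> Z"
    and "trunc_laplace A g z = 1" "trunc_laplace A g' z' = 1"
  shows "(z' - z) * (exp (- Z * A) * integral {0..A} (\<lambda>a. a * h a)) \<le> A * \<epsilon>"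
proof -
  have "exp (- Z * A) * (a * h a) \<le> a * g' a * exp (- z' * a)" if a: "a \<in> {0..A}" for a
  proof -
    have "z' * a \<le> Z * A"
      using a assms(7-9) by (intro mult_mono) auto
    then have "exp (- Z * A) * (a * h a) \<le> exp (- z' * a) * (a * g' a)"
      using a assms(5) by (intro mult_mono mult_left_mono) auto
    then show ?thesis
      by (simp add: mult_ac)
  qed
  then have "exp (- Z * A) * integral {0..A} (\<lambda>a. a * h a)
      \<le> integral {0..A} (\<lambda>a. a * g' a * exp (- z' * a))"
    by (subst integral_mult_right[symmetric], intro integral_le)
      (auto intro!: integrable_continuous_interval continuous_intros assms(3,4))
  then have "(z' - z) * (exp (- Z * A) * integral {0..A} (\<lambda>a. a * h a))
      \<le> (z' - z) * integral {0..A} (\<lambda>a. a * g' a * exp (- z' * a))"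
    using assms(8) by (intro mult_left_mono) auto
  also have "\<dots> \<le> trunc_laplace A g' z - trunc_laplace A g' z'"
  proof (rule trunc_laplace_diff_ge[OF assms(3) _ assms(8)])
    show "\<forall>a\<in>{0..A}. 0 \<le> g' a"
      using assms(5) by (meson order.trans)
  qed
  also have "\<dots> = trunc_laplace A g' z - trunc_laplace A g z"
    using assms(10,11) by simp
  also have "\<dots> \<le> A * \<epsilon>"
    using abs_trunc_laplace_diff_le[OF assms(1,2,3,6,7)] by (simp add: abs_le_iff)
  finally show ?thesis .
qed

lemma trunc_laplace_root_stability:
  assumes "0 \<le> A"
    and "continuous_on {0..A} g" "continuous_on {0..A} g'" "continuous_on {0..A} h"
    and "\<forall>a\<in>{0..A}. 0 \<le> h a \<and> h a \<le> g a \<and> h a \<le> g' a"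
    and "\<forall>a\<in>{0..A}. \<bar>g' a - g a\<bar> \<le> \<epsilon>"
    and "z \<in> {0..Z}" "z' \<in> {0..Z}"
    and "trunc_laplace A g z = 1" "trunc_laplace A g' z' = 1"
  shows "\<bar>z' - z\<bar> * (exp (- Z * A) * integral {0..A} (\<lambda>a. a * h a)) \<le> A * \<epsilon>"
proof (cases "z \<le> z'")
  case True
  then show ?thesis
    using trunc_laplace_root_increase_le[OF assms(1-4) _ assms(6) _ True _ assms(9,10)] assms(5,7,8)
    by simp
next
  case False
  have "\<forall>a\<in>{0..A}. \<bar>g a - g' a\<bar> \<le> \<epsilon>"
    using assms(6) by (simp add: abs_minus_commute)
  then show ?thesis
    using trunc_laplace_root_increase_le[OF assms(1,3,2,4) _ _ _ _ _ assms(10,9)] assms(5,7,8) False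
    by (simp add: abs_minus_commute)
qed

section \<open>The Lotka--Sharpe equation\<close>

definition net_maternity :: "(real \<Rightarrow> real) \<Rightarrow> (real \<Rightarrow> real) \<Rightarrow> real \<Rightarrow> real" where
  "net_maternity k \<mu> a = k a * exp (- integral {0..a} \<mu>)"

lemma lotka_eq_iff_trunc_laplace:
  "lotka_eq A k \<mu> z \<longleftrightarrow> trunc_laplace A (net_maternity k \<mu>) z = 1"
proof -
  have pointwise:
    "k a * exp (- z * a - integral {0..a} \<mu>) = k a * exp (- integral {0..a} \<mu>) * exp (- z * a)"
    for a
  proof -
    have "- z * a - integral {0..a} \<mu> = - integral {0..a} \<mu> + - z * a"
      by simp
    then show ?thesis
      by (simp only: exp_add mult.assoc)
  qed
  show ?thesis
    unfolding lotka_eq_def trunc_laplace_def net_maternity_def pointwise ..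
qed

lemma integrable_on_prefix:
  fixes \<mu> :: "real \<Rightarrow> real"
  assumes "continuous_on {0..A} \<mu>" "a \<in> {0..A}"
  shows "\<mu> integrable_on {0..a}"
  by (intro integrable_continuous_interval continuous_on_subset[OF assms(1)]) (use assms(2) in auto)

lemma continuous_on_net_maternity:
  assumes "continuous_on {0..A} k" "continuous_on {0..A} \<mu>"
  shows "continuous_on {0..A} (net_maternity k \<mu>)"
  unfolding net_maternity_def[abs_def]
  by (intro continuous_intros indefinite_integral_continuous_1 integrable_continuous_interval assms)

lemma integral_prefix_mono:
  fixes \<mu> \<mu>' :: "real \<Rightarrow> real"
  assumes "continuous_on {0..A} \<mu>" "continuous_on {0..A} \<mu>'" "\<forall>b\<in>{0..A}. \<mu> b \<le> \<mu>' b"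
    and "a \<in> {0..A}"
  shows "integral {0..a} \<mu> \<le> integral {0..a} \<mu>'"
  using assms by (intro integral_le integrable_on_prefix) auto

lemma integral_prefix_nonneg:
  fixes \<mu> :: "real \<Rightarrow> real"
  assumes "continuous_on {0..A} \<mu>" "\<forall>b\<in>{0..A}. 0 \<le> \<mu> b" "a \<in> {0..A}"
  shows "0 \<le> integral {0..a} \<mu>"
  using assms by (intro integral_nonneg integrable_on_prefix) auto

lemma abs_integral_prefix_diff_le:
  fixes \<mu> \<mu>' :: "real \<Rightarrow> real"
  assumes "continuous_on {0..A} \<mu>" "continuous_on {0..A} \<mu>'" "\<forall>b\<in>{0..A}. \<bar>\<mu>' b - \<mu> b\<bar> \<le> N"
    and "a \<in> {0..A}"
  shows "\<bar>integral {0..a} \<mu>' - integral {0..a} \<mu>\<bar> \<le> a * N"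
proof -
  have "\<bar>integral {0..a} (\<lambda>b. \<mu>' b - \<mu> b)\<bar> \<le> integral {0..a} (\<lambda>_. N)"
    using assms
    by (intro Henstock_Kurzweil_Integration.integral_norm_bound_integral[where 'a = real,
          unfolded real_norm_def] integrable_diff integrable_on_prefix) auto
  then show ?thesis
    using assms(4)
    by (simp add: integral_diff integrable_on_prefix[OF assms(1,4)]
        integrable_on_prefix[OF assms(2,4)])
qed

lemma net_maternity_mono:
  assumes "continuous_on {0..A} \<mu>" "continuous_on {0..A} \<mu>'" "\<forall>b\<in>{0..A}. \<mu>' b \<le> \<mu> b"
    and "a \<in> {0..A}" "0 \<le> k a" "k a \<le> k' a"
  shows "net_maternity k \<mu> a \<le> net_maternity k' \<mu>' a"
  unfolding net_maternity_def
  using integral_prefix_mono[OF assms(2,1,3,4)] assms(5,6) by (intro mult_mono) auto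

lemma net_maternity_le:
  assumes "continuous_on {0..A} \<mu>" "\<forall>b\<in>{0..A}. 0 \<le> \<mu> b"
    and "a \<in> {0..A}" "0 \<le> k a" "k a \<le> K"
  shows "net_maternity k \<mu> a \<le> K"
proof -
  have "net_maternity k \<mu> a \<le> K * 1"
    unfolding net_maternity_def using integral_prefix_nonneg[OF assms(1-3)] assms(4,5)
    by (intro mult_mono) auto
  then show ?thesis
    by simp
qed

lemma abs_net_maternity_diff_le:
  assumes "continuous_on {0..A} \<mu>" "continuous_on {0..A} \<mu>'"
    and "\<forall>b\<in>{0..A}. 0 \<le> \<mu> b \<and> 0 \<le> \<mu>' b" "\<forall>b\<in>{0..A}. \<bar>\<mu>' b - \<mu> b\<bar> \<le> N\<^sub>\<mu>"
    and "a \<in> {0..A}" "0 \<le> k a" "k a \<le> K" "\<bar>k' a - k a\<bar> \<le> N\<^sub>k"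
  shows "\<bar>net_maternity k' \<mu>' a - net_maternity k \<mu> a\<bar> \<le> N\<^sub>k + K * (A * N\<^sub>\<mu>)"
proof -
  define E where "E = exp (- integral {0..a} \<mu>)"
  define E' where "E' = exp (- integral {0..a} \<mu>')"
  have "0 \<le> integral {0..a} \<mu>" "0 \<le> integral {0..a} \<mu>'"
    using assms(3,5) by (auto intro!: integral_prefix_nonneg assms(1,2))
  then have E': "0 < E'" "E' \<le> 1"
    unfolding E'_def by auto
  have "\<bar>E' - E\<bar> \<le> \<bar>integral {0..a} \<mu>' - integral {0..a} \<mu>\<bar>"
    unfolding E_def E'_def using \<open>0 \<le> integral {0..a} \<mu>'\<close> \<open>0 \<le> integral {0..a} \<mu>\<close>
    by (rule abs_exp_minus_diff_le)
  also have "\<dots> \<le> a * N\<^sub>\<mu>"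
    by (rule abs_integral_prefix_diff_le[OF assms(1,2,4,5)])
  also have "\<dots> \<le> A * N\<^sub>\<mu>"
    using assms(4,5) by (intro mult_right_mono) force+
  finally have dE: "\<bar>E' - E\<bar> \<le> A * N\<^sub>\<mu>" .
  have "\<bar>net_maternity k' \<mu>' a - net_maternity k \<mu> a\<bar> = \<bar>(k' a - k a) * E' + k a * (E' - E)\<bar>"
    unfolding net_maternity_def E_def E'_def by (simp add: algebra_simps)
  also have "\<dots> \<le> \<bar>(k' a - k a) * E'\<bar> + \<bar>k a * (E' - E)\<bar>"
    by (rule abs_triangle_ineq)
  also have "\<dots> = \<bar>k' a - k a\<bar> * E' + k a * \<bar>E' - E\<bar>"
    using E' assms(6) by (simp add: abs_mult)
  also have "\<dots> \<le> N\<^sub>k * 1 + K * (A * N\<^sub>\<mu>)"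
    using E' assms(6-8) dE by (intro add_mono mult_mono) auto
  finally show ?thesis
    by simp
qed

lemma lotka_roots:
  assumes "0 < A" "continuous_on {0..A} k" "continuous_on {0..A} \<mu>" "\<forall>a\<in>{0..A}. 0 \<le> k a"
    and "1 < integral {0..A} (net_maternity k \<mu>)"
  shows "0 < lotka_P A k \<mu>" "trunc_laplace A (net_maternity k \<mu>) (lotka_P A k \<mu>) = 1"
    and "lotka_sol A k \<mu> = lotka_P A k \<mu>"
proof -
  have g: "continuous_on {0..A} (net_maternity k \<mu>)" "\<forall>a\<in>{0..A}. 0 \<le> net_maternity k \<mu> a"
    using continuous_on_net_maternity[OF assms(2,3)] assms(4) by (auto simp: net_maternity_def)
  obtain z where z: "trunc_laplace A (net_maternity k \<mu>) z = 1"
    and unique: "\<And>y. trunc_laplace A (net_maternity k \<mu>) y = 1 \<Longrightarrow> y = z"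
    using trunc_laplace_eq_1_ex1[OF assms(1) g assms(5)] by blast
  have "0 < z"
    by (rule trunc_laplace_eq_1_imp_pos[OF assms(1) g assms(5) z])
  have "lotka_P A k \<mu> = z"
    unfolding lotka_P_def lotka_eq_iff_trunc_laplace
    by (rule the_equality) (use z unique \<open>0 < z\<close> in blast)+
  moreover have "lotka_sol A k \<mu> = z"
    unfolding lotka_sol_def lotka_eq_iff_trunc_laplace
    by (rule the_equality) (use z unique in blast)+
  ultimately show "0 < lotka_P A k \<mu>" "trunc_laplace A (net_maternity k \<mu>) (lotka_P A k \<mu>) = 1"
    and "lotka_sol A k \<mu> = lotka_P A k \<mu>"
    using z \<open>0 < z\<close> by simp_all
qed

lemma exp_mul_ln_le_powr:
  fixes x R :: real
  assumes "1 < R" "R \<le> x"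
  shows "exp x * ln R \<le> (2 * x) powr (2 * x - 1)"
proof -
  have "1 < x" "0 < ln x"
    using assms by auto
  have "exp x * ln R \<le> exp x * ln x"
    using assms by simp
  also have "\<dots> = exp (x + ln (ln x))"
    using \<open>0 < ln x\<close> by (simp add: exp_add)
  also have "\<dots> \<le> exp ((2 * x - 1) * ln (2 * x))"
  proof -
    have "ln (ln x) \<le> ln x - 1"
      using ln_le_minus_one[OF \<open>0 < ln x\<close>] .
    moreover have "ln x \<le> (2 * x - 1) * ln x"
      using \<open>1 < x\<close> \<open>0 < ln x\<close> by (simp add: mult_le_cancel_right1)
    moreover have "x - 1 \<le> (2 * x - 1) * ln 2"
    proof -
      have "x - 1 \<le> (2 * x - 1) * (2 / 3)"
        using \<open>1 < x\<close> by (simp add: field_simps)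
      also have "\<dots> \<le> (2 * x - 1) * ln 2"
        using ln2_ge_two_thirds \<open>1 < x\<close> by (intro mult_left_mono) auto
      finally show ?thesis .
    qed
    moreover have "ln (2 * x) = ln 2 + ln x"
      using \<open>1 < x\<close> by (simp add: ln_mult)
    ultimately show ?thesis
      by (simp add: distrib_left)
  qed
  also have "\<dots> = (2 * x) powr (2 * x - 1)"
    using \<open>1 < x\<close> by (simp add: powr_def)
  finally show ?thesis .
qed

section \<open>The Lotka--Sharpe map on a box of vital rates\<close>

locale lotka_box =
  fixes A :: real and kmin kmax \<mu>min \<mu>max :: "real \<Rightarrow> real"
  assumes A_pos: "0 < A"
    and continuous: "continuous_on {0..A} kmin" "continuous_on {0..A} kmax"
      "continuous_on {0..A} \<mu>min" "continuous_on {0..A} \<mu>max"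
    and nonneg: "\<forall>a\<in>{0..A}. 0 \<le> kmin a \<and> 0 \<le> \<mu>min a"
    and order: "\<forall>a\<in>{0..A}. kmin a \<le> kmax a \<and> \<mu>min a \<le> \<mu>max a"
    and supercritical: "1 < integral {0..A} (net_maternity kmin \<mu>max)"
begin

definition admissible :: "(real \<Rightarrow> real) \<Rightarrow> (real \<Rightarrow> real) \<Rightarrow> bool" where
  "admissible k \<mu> \<longleftrightarrow> continuous_on {0..A} k \<and> continuous_on {0..A} \<mu> \<and>
     (\<forall>a\<in>{0..A}. kmin a \<le> k a \<and> k a \<le> kmax a \<and> \<mu>min a \<le> \<mu> a \<and> \<mu> a \<le> \<mu>max a)"

lemma admissible_extremes: "admissible kmin \<mu>max" "admissible kmax \<mu>min"
  using continuous order unfolding admissible_def by auto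

lemma admissible_nonneg:
  assumes "admissible k \<mu>"
  shows "\<forall>a\<in>{0..A}. 0 \<le> k a \<and> 0 \<le> \<mu> a"
proof
  fix a assume a: "a \<in> {0..A}"
  then have "kmin a \<le> k a" "\<mu>min a \<le> \<mu> a" "0 \<le> kmin a" "0 \<le> \<mu>min a"
    using assms nonneg unfolding admissible_def by auto
  then show "0 \<le> k a \<and> 0 \<le> \<mu> a"
    by linarith
qed

lemma admissible_net_maternity:
  assumes "admissible k \<mu>"
  shows "continuous_on {0..A} (net_maternity k \<mu>)" "\<forall>a\<in>{0..A}. 0 \<le> net_maternity k \<mu> a"
  using continuous_on_net_maternity[of A k \<mu>] assms admissible_nonneg[OF assms]
  unfolding admissible_def by (auto simp: net_maternity_def)

lemma admissible_net_maternity_bounds: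
  assumes "admissible k \<mu>" "a \<in> {0..A}"
  shows "net_maternity kmin \<mu>max a \<le> net_maternity k \<mu> a"
    and "net_maternity k \<mu> a \<le> net_maternity kmax \<mu>min a"
  using assms admissible_nonneg[OF assms(1)] nonneg continuous unfolding admissible_def
  by (auto intro!: net_maternity_mono)

lemma admissible_supercritical:
  assumes "admissible k \<mu>"
  shows "1 < integral {0..A} (net_maternity k \<mu>)"
proof -
  have "integral {0..A} (net_maternity kmin \<mu>max) \<le> integral {0..A} (net_maternity k \<mu>)"
    using assms admissible_net_maternity_bounds(1)[OF assms] continuous
    by (intro integral_le integrable_continuous_interval continuous_on_net_maternity)
      (auto simp: admissible_def)
  with supercritical show ?thesis
    by linarith
qed

lemma admissible_lotka_roots:
  assumes "admissible k \<mu>"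
  shows "0 < lotka_P A k \<mu>" "trunc_laplace A (net_maternity k \<mu>) (lotka_P A k \<mu>) = 1"
    and "lotka_sol A k \<mu> = lotka_P A k \<mu>"
  using lotka_roots[OF A_pos _ _ _ admissible_supercritical[OF assms]] assms
    admissible_nonneg[OF assms]
  by (auto simp: admissible_def)

lemma lotka_P_mem_bounds:
  assumes "admissible k \<mu>"
  shows "lotka_P A k \<mu> \<in> {lotka_sol A kmin \<mu>max..lotka_sol A kmax \<mu>min}"
proof -
  note extremes = admissible_extremes[THEN admissible_net_maternity(1)]
    admissible_extremes[THEN admissible_lotka_roots(2)]
  have "lotka_P A kmin \<mu>max \<le> lotka_P A k \<mu>"
  proof (rule trunc_laplace_root_mono[OF A_pos extremes(1) admissible_net_maternity(1)[OF assms] _ _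
        extremes(3) admissible_lotka_roots(2)[OF assms]])
    show "\<forall>a\<in>{0..A}.
        0 \<le> net_maternity kmin \<mu>max a \<and> net_maternity kmin \<mu>max a \<le> net_maternity k \<mu> a"
      using admissible_net_maternity(2)[OF admissible_extremes(1)]
        admissible_net_maternity_bounds(1)[OF assms]
      by simp
    show "integral {0..A} (net_maternity kmin \<mu>max) \<noteq> 0"
      using supercritical by simp
  qed
  moreover have "lotka_P A k \<mu> \<le> lotka_P A kmax \<mu>min"
  proof (rule trunc_laplace_root_mono[OF A_pos admissible_net_maternity(1)[OF assms] extremes(2) _ _
        admissible_lotka_roots(2)[OF assms] extremes(4)])
    show "\<forall>a\<in>{0..A}. 0 \<le> net_maternity k \<mu> a \<and> net_maternity k \<mu> a \<le> net_maternity kmax \<mu>min a"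
      using admissible_net_maternity(2)[OF assms] admissible_net_maternity_bounds(2)[OF assms]
      by simp
    show "integral {0..A} (net_maternity k \<mu>) \<noteq> 0"
      using admissible_supercritical[OF assms] by simp
  qed
  ultimately show ?thesis
    using admissible_extremes[THEN admissible_lotka_roots(3)] by simp
qed

lemma age_weighted_net_maternity_pos: "0 < integral {0..A} (\<lambda>a. a * net_maternity kmin \<mu>max a)"
  using supercritical admissible_net_maternity[OF admissible_extremes(1)]
  by (intro integral_weighted_pos[OF A_pos]) auto

lemma admissible_le_sup_norm:
  assumes "admissible k \<mu>" "a \<in> {0..A}"
  shows "k a \<le> sup_norm A kmax"
proof -
  have "k a \<le> kmax a"
    using assms unfolding admissible_def by blast
  also have "\<dots> \<le> sup_norm A kmax"
    using abs_le_sup_norm[OF continuous(2) assms(2)] by linarith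
  finally show ?thesis .
qed

lemma admissible_net_maternity_le_sup_norm:
  assumes "admissible k \<mu>" "a \<in> {0..A}"
  shows "net_maternity k \<mu> a \<le> sup_norm A kmax"
  using assms admissible_nonneg[OF assms(1)] admissible_le_sup_norm[OF assms]
  unfolding admissible_def
  by (intro net_maternity_le[of A \<mu>]) auto

lemma lotka_P_le_sup_norm:
  assumes "admissible k \<mu>"
  shows "lotka_P A k \<mu> \<le> sup_norm A kmax"
  using A_pos admissible_net_maternity(2)[OF assms] admissible_net_maternity_le_sup_norm[OF assms]
  by (intro trunc_laplace_root_le[OF _ admissible_net_maternity(1)[OF assms] _
        admissible_lotka_roots(1,2)[OF assms]]) auto

lemma admissible_net_maternity_diff_le:
  assumes adm: "admissible k \<mu>" and adm': "admissible k' \<mu>'" and a: "a \<in> {0..A}"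
  shows "\<bar>net_maternity k' \<mu>' a - net_maternity k \<mu> a\<bar>
           \<le> sup_norm A (\<lambda>a. k' a - k a) + sup_norm A kmax * (A * sup_norm A (\<lambda>a. \<mu>' a - \<mu> a))"
proof -
  have "continuous_on {0..A} k" "continuous_on {0..A} k'" and cont: "continuous_on {0..A} \<mu>"
    "continuous_on {0..A} \<mu>'"
    using adm adm' unfolding admissible_def by blast+
  then have cont_diff:
    "continuous_on {0..A} (\<lambda>a. k' a - k a)" "continuous_on {0..A} (\<lambda>a. \<mu>' a - \<mu> a)"
    by (auto intro: continuous_on_diff)
  show ?thesis
  proof (rule abs_net_maternity_diff_le[OF cont _ _ a])
    show "\<forall>b\<in>{0..A}. \<bar>\<mu>' b - \<mu> b\<bar> \<le> sup_norm A (\<lambda>a. \<mu>' a - \<mu> a)"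
      using abs_le_sup_norm[OF cont_diff(2)] by blast
    show "\<bar>k' a - k a\<bar> \<le> sup_norm A (\<lambda>a. k' a - k a)"
      using abs_le_sup_norm[OF cont_diff(1) a] .
    show "\<forall>b\<in>{0..A}. 0 \<le> \<mu> b \<and> 0 \<le> \<mu>' b"
      using admissible_nonneg[OF adm] admissible_nonneg[OF adm'] by blast
    show "0 \<le> k a" "k a \<le> sup_norm A kmax"
      using admissible_nonneg[OF adm] a admissible_le_sup_norm[OF adm a] by auto
  qed
qed

lemma lotka_P_stability:
  defines "K \<equiv> sup_norm A kmax" and "D \<equiv> integral {0..A} (\<lambda>a. a * net_maternity kmin \<mu>max a)"
  assumes adm: "admissible k \<mu>" and adm': "admissible k' \<mu>'"
  shows "\<bar>lotka_P A k' \<mu>' - lotka_P A k \<mu>\<bar> * (exp (- K * A) * D)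
           \<le> A * (sup_norm A (\<lambda>a. k' a - k a) + K * (A * sup_norm A (\<lambda>a. \<mu>' a - \<mu> a)))"
  unfolding K_def D_def
proof (rule trunc_laplace_root_stability[OF _ admissible_net_maternity(1)[OF adm]
      admissible_net_maternity(1)[OF adm'] admissible_net_maternity(1)[OF admissible_extremes(1)]
      _ _ _ _ admissible_lotka_roots(2)[OF adm] admissible_lotka_roots(2)[OF adm']])
  show "\<forall>a\<in>{0..A}. 0 \<le> net_maternity kmin \<mu>max a \<and> net_maternity kmin \<mu>max a \<le> net_maternity k \<mu> a
      \<and> net_maternity kmin \<mu>max a \<le> net_maternity k' \<mu>' a"
    using admissible_net_maternity(2)[OF admissible_extremes(1)]
      admissible_net_maternity_bounds(1)[OF adm] admissible_net_maternity_bounds(1)[OF adm']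
    by blast
  show "lotka_P A k \<mu> \<in> {0..sup_norm A kmax}" "lotka_P A k' \<mu>' \<in> {0..sup_norm A kmax}"
    using admissible_lotka_roots(1) lotka_P_le_sup_norm adm adm' by (auto intro: less_imp_le)
qed (use A_pos admissible_net_maternity_diff_le[OF adm adm'] in auto)

lemma exp_factor_le_lipschitz_constant:
  defines "K \<equiv> sup_norm A kmax" and "D \<equiv> integral {0..A} (\<lambda>a. a * net_maternity kmin \<mu>max a)"
    and "R \<equiv> integral {0..A} (net_maternity kmin \<mu>max)"
  shows "exp (K * A) * A / D \<le> A * (2 * A * K) powr (2 * A * K - 1) / (D * ln R)"
proof -
  have "R \<le> integral {0..A} (\<lambda>_. K)"
    unfolding R_def K_def
    using admissible_net_maternity_le_sup_norm[OF admissible_extremes(1)]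
    by (intro integral_le integrable_continuous_interval integrable_const_ivl
        admissible_net_maternity(1)[OF admissible_extremes(1)]) auto
  then have "R \<le> A * K"
    using A_pos by simp
  then have "exp (A * K) * ln R \<le> (2 * (A * K)) powr (2 * (A * K) - 1)"
    using supercritical unfolding R_def by (intro exp_mul_ln_le_powr) auto
  moreover have "0 < ln R" "0 < D"
    using supercritical age_weighted_net_maternity_pos unfolding R_def D_def by auto
  ultimately show ?thesis
    using A_pos by (simp add: field_simps mult_ac)
qed

lemma lotka_P_lipschitz:
  defines "K \<equiv> sup_norm A kmax" and "D \<equiv> integral {0..A} (\<lambda>a. a * net_maternity kmin \<mu>max a)"
    and "R \<equiv> integral {0..A} (net_maternity kmin \<mu>max)"
  defines "L \<equiv> A * (2 * A * K) powr (2 * A * K - 1) / (D * ln R)"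
  assumes "admissible k \<mu>" "admissible k' \<mu>'"
  shows "\<bar>lotka_P A k' \<mu>' - lotka_P A k \<mu>\<bar>
           \<le> L * sup_norm A (\<lambda>a. k' a - k a) + L * K * A * sup_norm A (\<lambda>a. \<mu>' a - \<mu> a)"
proof -
  define \<epsilon> where "\<epsilon> = sup_norm A (\<lambda>a. k' a - k a) + K * (A * sup_norm A (\<lambda>a. \<mu>' a - \<mu> a))"
  have "0 \<le> \<epsilon>"
    using assms(5,6) A_pos unfolding \<epsilon>_def K_def admissible_def
    by (intro add_nonneg_nonneg mult_nonneg_nonneg sup_norm_nonneg continuous_on_diff
        continuous(2)) auto
  have "\<bar>lotka_P A k' \<mu>' - lotka_P A k \<mu>\<bar> \<le> exp (K * A) * A / D * \<epsilon>"
    using lotka_P_stability[OF assms(5,6)] age_weighted_net_maternity_pos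
    unfolding K_def D_def \<epsilon>_def by (simp add: field_simps exp_minus)
  also have "\<dots> \<le> L * \<epsilon>"
    using exp_factor_le_lipschitz_constant \<open>0 \<le> \<epsilon>\<close> unfolding L_def K_def D_def R_def
    by (intro mult_right_mono)
  finally show ?thesis
    unfolding \<epsilon>_def by (simp add: algebra_simps)
qed

end

theorem theorem1:
  fixes A G :: real and kmin kmax \<mu>min \<mu>max :: "real \<Rightarrow> real"
  assumes A_pos: "0 < A"
    and cont: "continuous_on {0..A} kmin" "continuous_on {0..A} kmax"
              "continuous_on {0..A} \<mu>min" "continuous_on {0..A} \<mu>max"
    and nonneg: "\<forall>a\<in>{0..A}. 0 \<le> kmin a \<and> 0 \<le> kmax a \<and> 0 \<le> \<mu>min a \<and> 0 \<le> \<mu>max a"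
    and lip: "\<exists>C. C-lipschitz_on {0..A} kmin" "\<exists>C. C-lipschitz_on {0..A} kmax"
             "\<exists>C. C-lipschitz_on {0..A} \<mu>min" "\<exists>C. C-lipschitz_on {0..A} \<mu>max"
    and order: "\<forall>a\<in>{0..A}. kmin a \<le> kmax a \<and> \<mu>min a \<le> \<mu>max a"
    and R0: "integral {0..A} (\<lambda>a. kmin a * exp (- integral {0..a} \<mu>max)) > 1"
    and G_pos: "0 < G"
    and G_bound: "\<forall>f\<in>{kmin, kmax, \<mu>min, \<mu>max}. sup_norm A f + lip_seminorm A f \<le> G"
  defines "\<zeta>min \<equiv> lotka_sol A kmin \<mu>max"
    and "\<zeta>max \<equiv> lotka_sol A kmax \<mu>min"
    and "S \<equiv> {(k, \<mu>). k \<in> H_G A G \<and> \<mu> \<in> H_G A G \<and>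
                (\<forall>a\<in>{0..A}. kmin a \<le> k a \<and> k a \<le> kmax a \<and> \<mu>min a \<le> \<mu> a \<and> \<mu> a \<le> \<mu>max a)}"
    and "I \<equiv> (\<lambda>a. exp (- integral {0..a} \<mu>max))"
    and "K \<equiv> sup_norm A kmax"
  defines "L \<equiv> A * (2 * A * K) powr (2 * A * K - 1) /
               (integral {0..A} (\<lambda>a. a * kmin a * I a) * ln (integral {0..A} (\<lambda>a. kmin a * I a)))"
  shows "(\<forall>(k, \<mu>)\<in>S. lotka_P A k \<mu> \<in> {\<zeta>min..\<zeta>max}) \<and>
         (\<forall>(k, \<mu>)\<in>S. \<forall>(k', \<mu>')\<in>S.
            \<bar>lotka_P A k' \<mu>' - lotka_P A k \<mu>\<bar>
              \<le> L * sup_norm A (\<lambda>a. k' a - k a) + L * K * A * sup_norm A (\<lambda>a. \<mu>' a - \<mu> a))"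
proof -
  interpret lotka_box A kmin kmax \<mu>min \<mu>max
    using A_pos cont nonneg order R0 by unfold_locales (auto simp: net_maternity_def[abs_def])
  \<comment> \<open>Membership in H_G is only used through continuity.\<close>
  have admissible: "admissible k \<mu>" if "(k, \<mu>) \<in> S" for k \<mu>
    using that unfolding S_def H_G_def admissible_def by auto
  have L_eq: "L = A * (2 * A * K) powr (2 * A * K - 1) /
      (integral {0..A} (\<lambda>a. a * net_maternity kmin \<mu>max a) *
       ln (integral {0..A} (net_maternity kmin \<mu>max)))"
    unfolding L_def I_def net_maternity_def[abs_def] by (simp add: mult.assoc)
  have "lotka_P A k \<mu> \<in> {\<zeta>min..\<zeta>max}" if "(k, \<mu>) \<in> S" for k \<mu>
    using lotka_P_mem_bounds[OF admissible[OF that]] unfolding \<zeta>min_def \<zeta>max_def .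
  moreover have "\<bar>lotka_P A k' \<mu>' - lotka_P A k \<mu>\<bar>
      \<le> L * sup_norm A (\<lambda>a. k' a - k a) + L * K * A * sup_norm A (\<lambda>a. \<mu>' a - \<mu> a)"
    if "(k, \<mu>) \<in> S" "(k', \<mu>') \<in> S" for k \<mu> k' \<mu>'
    using lotka_P_lipschitz[OF admissible[OF that(1)] admissible[OF that(2)]] unfolding L_eq K_def .
  ultimately show ?thesis
    by blast
qed

end
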